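(* Fix $\gamma\ge1$, $\beta\in(0,1)$ and $r>0$ with $r>\beta$. Let $\Psi$ be a continuous survival function that is asymptotically generalized Gaussian on the right with exponent $\gamma$. For each $n$, let $m=\lfloor n^{1-\beta}\rfloor$ and $\mu=(\gamma r\log n)^{1/\gamma}$, and let $\mathscr{F}\subset[n]$ be a uniformly random subset of size $m$. Set $\mu_i=\mu$ for $i\in\mathscr{F}$ and $\mu_i=0$ otherwise. Let $X_1,\dots,X_n$ be independent with $X_i$ having survival function $\Psi(\cdot-\mu_i)$. Let $q=q_n\in(0,1)$ satisfy $n^a q_n\to\infty$ for every fixed $a>0$. Then the Benjamini–Hochberg procedure at level $q$ satisfies $\mathrm{FNP}\to0$ in probability as $n\to\infty$. If in addition $q_n\to0$, then its risk $\mathrm{FDR}+\mathrm{FNR}$ tends to $0$.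
   Context: The survival function of $Y$ is $y\mapsto\mathbb{P}(Y\ge y)$. A survival function $\Psi$ is AGG on the right with exponent $\gamma>0$ if $\lim_{x\to\infty}x^{-\gamma}\log\Psi(x)=-1/\gamma$. For a rejection set $\mathscr{R}$: - $\mathrm{FDP}(\mathscr{R})=|\mathscr{R}\setminus\mathscr{F}|/|\mathscr{R}|$, - $\mathrm{FNP}(\mathscr{R})=|\mathscr{F}\setminus\mathscr{R}|/|\mathscr{F}|$, with $0/0=0$. $\mathrm{FDR}$ and $\mathrm{FNR}$ are the expectations of $\mathrm{FDP}$ and $\mathrm{FNP}$. Benjamini–Hochberg (BH) procedure: let $P_i=\Psi(X_i)$ be the P-values, and let $P_{(1)}\le\cdots\le P_{(n)}$ be their ordered values. Let $X_{(1)}\ge\cdots\ge X_{(n)}$ be the decreasing order statistics. Set $\iota_{\rm BH}=\max\{i: P_{(i)}\le iq/n\}$. The procedure rejects $\{i: X_i\ge X_{(\iota_{\rm BH})}\}$, and rejects nothing if the set in the definition of $\iota_{\rm BH}$ is empty. *)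

theory Defs
  imports "HOL-Probability.Probability"
begin

definition AGG_right :: "(real \<Rightarrow> real) \<Rightarrow> real \<Rightarrow> bool" where
  "AGG_right \<Psi> \<gamma> \<longleftrightarrow> \<gamma> > 0 \<and>
     ((\<lambda>x. x powr (-\<gamma>) * ln (\<Psi> x)) \<longlongrightarrow> -1/\<gamma>) at_top"

text \<open>Decreasing order statistics X_(1) >= ... >= X_(n) of X_0,...,X_(n-1); index k in 1..n.\<close>
definition X_ord :: "nat \<Rightarrow> (nat \<Rightarrow> real) \<Rightarrow> nat \<Rightarrow> real" where
  "X_ord n X k = rev (sort (map X [0..<n])) ! (k - 1)"

definition P_ord :: "(real \<Rightarrow> real) \<Rightarrow> nat \<Rightarrow> (nat \<Rightarrow> real) \<Rightarrow> nat \<Rightarrow> real" where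
  "P_ord \<Psi> n X k = sort (map (\<lambda>i. \<Psi> (X i)) [0..<n]) ! (k - 1)"

definition BH_index :: "(real \<Rightarrow> real) \<Rightarrow> real \<Rightarrow> nat \<Rightarrow> (nat \<Rightarrow> real) \<Rightarrow> nat" where
  "BH_index \<Psi> q n X =
     (let S = {i \<in> {1..n}. P_ord \<Psi> n X i \<le> real i * q / real n} in
      if S = {} then 0 else Max S)"

definition BH_rej :: "(real \<Rightarrow> real) \<Rightarrow> real \<Rightarrow> nat \<Rightarrow> (nat \<Rightarrow> real) \<Rightarrow> nat set" where
  "BH_rej \<Psi> q n X =
     (if BH_index \<Psi> q n X = 0 then {}
      else {i \<in> {..<n}. X i \<ge> X_ord n X (BH_index \<Psi> q n X)})"

definition FDP :: "nat set \<Rightarrow> nat set \<Rightarrow> real" where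
  "FDP F R = real (card (R - F)) / real (card R)"

definition FNP :: "nat set \<Rightarrow> nat set \<Rightarrow> real" where
  "FNP F R = real (card (F - R)) / real (card F)"

text \<open>Joint law of (F, X): F uniform among subsets of {0..<n} of size m; given F,
  the X_i are independent, X_i distributed as Y + mu_i where Y ~ D,
  mu_i = mu for i in F, 0 otherwise.\<close>
definition sparse_model ::
  "real measure \<Rightarrow> nat \<Rightarrow> nat \<Rightarrow> real \<Rightarrow> (nat set \<times> (nat \<Rightarrow> real)) measure" where
  "sparse_model D n m \<mu> =
     bind (uniform_count_measure {A. A \<subseteq> {..<n} \<and> card A = m})
       (\<lambda>F. distr (PiM {..<n} (\<lambda>i. distr D borel (\<lambda>x. x + (if i \<in> F then \<mu> else 0))))
                   (count_space (Pow {..<n}) \<Otimes>\<^sub>M PiM {..<n} (\<lambda>_. borel))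
                   (\<lambda>x. (F, x)))"

end

theory Submission
  imports Defs "HOL-Real_Asymp.Real_Asymp"
begin

text \<open>Fix \<delta> \<le> 1/2 and the threshold t = (\<gamma> s log n)^(1/\<gamma>) with \<beta> < s < r. The signal mean
  \<mu> = (\<gamma> r log n)^(1/\<gamma>) exceeds t by a multiple of (log n)^(1/\<gamma>), so a signal falls below t
  with vanishing probability p, and by a union bound over v-element sets more than \<delta> m signals
  do so with probability O(p / \<delta>). The AGG tail gives \<Psi>(t) \<le> n^(-s') for \<beta> < s' < s, which is
  below m q / (2 n) since n^a q \<rightarrow> \<infinity> for every a > 0. Hence, once at most half of the signals
  lie below t, every observation above t is rejected by BH, and FNP \<le> \<delta>. For the FDP: V false
  rejections force V null P-values below (m + V) q / n, and some count v \<ge> \<delta> m / 2 of null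
  P-values below (m + v) q / n occurs with probability at most \<Sum> (e (1 + 2/\<delta>) q)^v = O(q),
  which vanishes when q \<rightarrow> 0.\<close>

section \<open>Counting below and above order statistics\<close>

lemma card_nth_less_sorted:
  assumes "sorted s" "p < length s"
  shows "card {j. j < length s \<and> s ! j < s ! p} \<le> p"
proof -
  have "{j. j < length s \<and> s ! j < s ! p} \<subseteq> {..<p}"
    using sorted_nth_mono[OF assms(1), of p] assms(2) by (auto simp: not_less[symmetric])
  then show ?thesis by (metis card_lessThan card_mono finite_lessThan)
qed

lemma card_nth_le_sorted:
  assumes "sorted s" "p < length s"
  shows "Suc p \<le> card {j. j < length s \<and> s ! j \<le> s ! p}"
proof -
  have "{..p} \<subseteq> {j. j < length s \<and> s ! j \<le> s ! p}"
    using sorted_nth_mono[OF assms(1)] assms(2) by auto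
  then show ?thesis by (metis card_atMost card_mono finite_Collect_conjI finite_Collect_less_nat)
qed

lemma card_filter_sort_map:
  fixes f :: "nat \<Rightarrow> 'a::linorder"
  shows "card {j. j < n \<and> P (f j)} = card {j. j < n \<and> P (sort (map f [0..<n]) ! j)}"
proof -
  have "card {j. j < n \<and> P (f j)} = length (filter P (map f [0..<n]))"
    by (auto simp: length_filter_conv_card intro!: arg_cong[where f = card])
  also have "\<dots> = length (filter P (sort (map f [0..<n])))"
    by (metis mset_filter mset_sort size_mset)
  also have "\<dots> = card {j. j < n \<and> P (sort (map f [0..<n]) ! j)}"
    by (simp add: length_filter_conv_card)
  finally show ?thesis .
qed

lemma card_less_sort_nth:
  fixes f :: "nat \<Rightarrow> 'a::linorder"
  assumes "1 \<le> k" "k \<le> n"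
  shows "card {j. j < n \<and> f j < sort (map f [0..<n]) ! (k - 1)} < k"
  using card_filter_sort_map[of n "\<lambda>x. x < sort (map f [0..<n]) ! (k - 1)" f]
    card_nth_less_sorted[of "sort (map f [0..<n])" "k - 1"] assms
  by fastforce

lemma card_le_sort_nth:
  fixes f :: "nat \<Rightarrow> 'a::linorder"
  assumes "1 \<le> k" "k \<le> n"
  shows "k \<le> card {j. j < n \<and> f j \<le> sort (map f [0..<n]) ! (k - 1)}"
  using card_filter_sort_map[of n "\<lambda>x. x \<le> sort (map f [0..<n]) ! (k - 1)" f]
    card_nth_le_sorted[of "sort (map f [0..<n])" "k - 1"] assms
  by simp

lemma X_ord_eq_sort_nth:
  assumes "1 \<le> k" "k \<le> n"
  shows "X_ord n X k = sort (map X [0..<n]) ! (n - k)"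
  using assms by (simp add: X_ord_def rev_nth)

lemma card_greater_X_ord:
  assumes "1 \<le> k" "k \<le> n"
  shows "card {j. j < n \<and> X_ord n X k < X j} < k"
proof -
  let ?a = "X_ord n X k"
  have "{j. j < n \<and> ?a < X j} = {..<n} - {j. j < n \<and> X j \<le> ?a}" by auto
  then have "card {j. j < n \<and> ?a < X j} = n - card {j. j < n \<and> X j \<le> ?a}"
    by (simp add: card_Diff_subset subset_eq)
  moreover have "Suc (n - k) \<le> card {j. j < n \<and> X j \<le> ?a}"
    using card_le_sort_nth[of "Suc (n - k)" n X] assms by (simp add: X_ord_eq_sort_nth)
  ultimately show ?thesis using assms by linarith
qed

lemma card_ge_X_ord:
  assumes "1 \<le> k" "k \<le> n"
  shows "k \<le> card {j. j < n \<and> X_ord n X k \<le> X j}"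
proof -
  let ?a = "X_ord n X k"
  have "{j. j < n \<and> ?a \<le> X j} = {..<n} - {j. j < n \<and> X j < ?a}" by auto
  then have "card {j. j < n \<and> ?a \<le> X j} = n - card {j. j < n \<and> X j < ?a}"
    by (simp add: card_Diff_subset subset_eq)
  moreover have "card {j. j < n \<and> X j < ?a} < Suc (n - k)"
    using card_less_sort_nth[of "Suc (n - k)" n X] assms by (simp add: X_ord_eq_sort_nth)
  ultimately show ?thesis using assms by linarith
qed

section \<open>Deterministic properties of the BH procedure\<close>

lemma BH_index_eq_Max:
  assumes "BH_index \<Psi> q n X \<noteq> 0"
  shows "BH_index \<Psi> q n X = Max {i \<in> {1..n}. P_ord \<Psi> n X i \<le> real i * q / real n}"
  using assms unfolding BH_index_def Let_def by (auto split: if_splits)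

lemma le_BH_index:
  assumes "1 \<le> k" "k \<le> n" "P_ord \<Psi> n X k \<le> real k * q / real n"
  shows "k \<le> BH_index \<Psi> q n X"
proof -
  let ?S = "{i \<in> {1..n}. P_ord \<Psi> n X i \<le> real i * q / real n}"
  have "k \<in> ?S" using assms by auto
  then have "BH_index \<Psi> q n X = Max ?S" unfolding BH_index_def Let_def by auto
  with \<open>k \<in> ?S\<close> show ?thesis by simp
qed

lemma BH_index_bounds:
  assumes "BH_index \<Psi> q n X \<noteq> 0"
  shows "1 \<le> BH_index \<Psi> q n X" "BH_index \<Psi> q n X \<le> n"
    "P_ord \<Psi> n X (BH_index \<Psi> q n X) \<le> real (BH_index \<Psi> q n X) * q / real n"
proof -
  let ?S = "{i \<in> {1..n}. P_ord \<Psi> n X i \<le> real i * q / real n}"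
  have "?S \<noteq> {}" using assms unfolding BH_index_def Let_def by (auto split: if_splits)
  then have "BH_index \<Psi> q n X \<in> ?S"
    unfolding BH_index_eq_Max[OF assms] by (intro Max_in) auto
  then show "1 \<le> BH_index \<Psi> q n X" "BH_index \<Psi> q n X \<le> n"
    "P_ord \<Psi> n X (BH_index \<Psi> q n X) \<le> real (BH_index \<Psi> q n X) * q / real n"
    by simp_all
qed

lemma BH_rej_eq:
  assumes "BH_index \<Psi> q n X \<noteq> 0"
  shows "BH_rej \<Psi> q n X = {i. i < n \<and> X_ord n X (BH_index \<Psi> q n X) \<le> X i}"
  using assms unfolding BH_rej_def by auto

lemma BH_rej_subset: "BH_rej \<Psi> q n X \<subseteq> {..<n}"
  unfolding BH_rej_def by auto

lemma BH_index_le_card_BH_rej: "BH_index \<Psi> q n X \<le> card (BH_rej \<Psi> q n X)"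
proof (cases "BH_index \<Psi> q n X = 0")
  case False
  then show ?thesis
    using card_ge_X_ord[OF BH_index_bounds(1,2)[OF False], of X] BH_rej_eq[OF False] by simp
qed simp

text \<open>The rejected observations are the BH_index largest ones, so their P-values are among
  the BH_index smallest.\<close>

lemma BH_rej_pvalue_le:
  assumes anti: "antimono \<Psi>" and i: "i \<in> BH_rej \<Psi> q n X"
  shows "\<Psi> (X i) \<le> real (BH_index \<Psi> q n X) * q / real n"
proof -
  let ?k = "BH_index \<Psi> q n X"
  have nz: "?k \<noteq> 0" using i unfolding BH_rej_def by (auto split: if_splits)
  note k = BH_index_bounds[OF nz]
  have iX: "i < n" "X_ord n X ?k \<le> X i" using i BH_rej_eq[OF nz] by auto
  have "\<Psi> (X i) \<le> P_ord \<Psi> n X ?k"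
  proof (rule ccontr)
    assume c: "\<not> ?thesis"
    have "{j. j < n \<and> \<Psi> (X j) \<le> P_ord \<Psi> n X ?k} \<subseteq> {j. j < n \<and> X_ord n X ?k < X j}"
    proof safe
      fix j assume "\<Psi> (X j) \<le> P_ord \<Psi> n X ?k"
      then have "\<Psi> (X j) < \<Psi> (X i)" using c by linarith
      then have "X i < X j" by (metis antimonoD[OF anti] not_le)
      then show "X_ord n X ?k < X j" using iX by linarith
    qed
    then have "card {j. j < n \<and> \<Psi> (X j) \<le> P_ord \<Psi> n X ?k} \<le> card {j. j < n \<and> X_ord n X ?k < X j}"
      by (intro card_mono) auto
    then show False
      using card_le_sort_nth[OF k(1,2), of "\<lambda>i. \<Psi> (X i)"] card_greater_X_ord[OF k(1,2), of X]
      unfolding P_ord_def by linarith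
  qed
  then show ?thesis using k(3) by linarith
qed

lemma BH_rej_superset:
  assumes anti: "antimono \<Psi>"
    and k: "k = card {j. j < n \<and> t \<le> X j}" "1 \<le> k"
    and thr: "\<Psi> t \<le> real k * q / real n"
  shows "{j. j < n \<and> t \<le> X j} \<subseteq> BH_rej \<Psi> q n X"
proof
  let ?T = "{j. j < n \<and> t \<le> X j}"
  let ?k = "BH_index \<Psi> q n X"
  have kn: "k \<le> n" using k card_mono[of "{..<n}" ?T] by auto
  have "P_ord \<Psi> n X k \<le> \<Psi> t"
  proof (rule ccontr)
    assume c: "\<not> ?thesis"
    have "?T \<subseteq> {j. j < n \<and> \<Psi> (X j) < P_ord \<Psi> n X k}"
    proof safe
      fix j assume "t \<le> X j"
      then have "\<Psi> (X j) \<le> \<Psi> t" by (rule antimonoD[OF anti])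
      then show "\<Psi> (X j) < P_ord \<Psi> n X k" using c by linarith
    qed
    then have "k \<le> card {j. j < n \<and> \<Psi> (X j) < P_ord \<Psi> n X k}"
      unfolding k(1) by (intro card_mono) auto
    then show False using card_less_sort_nth[OF k(2) kn, of "\<lambda>i. \<Psi> (X i)"]
      unfolding P_ord_def by linarith
  qed
  then have "k \<le> ?k" using thr by (intro le_BH_index[OF k(2) kn]) linarith
  then have nz: "?k \<noteq> 0" using k(2) by linarith
  note bounds = BH_index_bounds[OF nz]
  fix i assume "i \<in> ?T"
  then have i: "i < n" "t \<le> X i" by auto
  have "X_ord n X ?k \<le> X i"
  proof (rule ccontr)
    assume "\<not> ?thesis"
    then have "{j. j < n \<and> X_ord n X ?k \<le> X j} \<subseteq> ?T - {i}" using i by auto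
    then have "card {j. j < n \<and> X_ord n X ?k \<le> X j} \<le> k - 1"
      using card_mono[of "?T - {i}"] i k(1) by (simp add: card_Diff_singleton)
    then show False using card_ge_X_ord[OF bounds(1,2), of X] \<open>k \<le> ?k\<close> k(2) by linarith
  qed
  then show "i \<in> BH_rej \<Psi> q n X" using BH_rej_eq[OF nz] i by auto
qed

text \<open>Self-consistency of BH: it rejects at most card F + V hypotheses, so each of its V false
  rejections is a null with P-value at most (card F + V) q / n.\<close>

lemma card_false_rejections_le:
  fixes \<Psi> :: "real \<Rightarrow> real" and X :: "nat \<Rightarrow> real" and n :: nat
  assumes anti: "antimono \<Psi>" and F: "finite F" and q: "0 \<le> q"
  defines "V \<equiv> card (BH_rej \<Psi> q n X - F)"
  shows "V \<le> card {j \<in> {..<n} - F. \<Psi> (X j) \<le> real (card F + V) * q / real n}"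
proof -
  let ?R = "BH_rej \<Psi> q n X"
  let ?N = "{j \<in> {..<n} - F. \<Psi> (X j) \<le> real (card F + V) * q / real n}"
  have "finite ?R" by (rule finite_subset[OF BH_rej_subset]) simp
  then have "card ?R \<le> card (F \<union> (?R - F))" using F by (intro card_mono) auto
  also have "\<dots> \<le> card F + V" unfolding V_def by (rule card_Un_le)
  finally have R: "BH_index \<Psi> q n X \<le> card F + V"
    using BH_index_le_card_BH_rej[of \<Psi> q n X] by linarith
  have "?R - F \<subseteq> ?N"
  proof
    fix j assume j: "j \<in> ?R - F"
    have "\<Psi> (X j) \<le> real (BH_index \<Psi> q n X) * q / real n"
      using BH_rej_pvalue_le[OF anti] j by blast
    also have "\<dots> \<le> real (card F + V) * q / real n"
      using R q by (intro divide_right_mono mult_right_mono) simp_all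
    finally show "j \<in> ?N" using j BH_rej_subset[of \<Psi> q n X] by blast
  qed
  then show ?thesis unfolding V_def by (intro card_mono) simp_all
qed

lemma FDP_nonneg: "0 \<le> FDP F R"
  unfolding FDP_def by simp

lemma FNP_nonneg: "0 \<le> FNP F R"
  unfolding FNP_def by simp

lemma FDP_le:
  assumes "real (card (R - F)) \<le> \<delta> * real (card R)" "0 \<le> \<delta>"
  shows "FDP F R \<le> \<delta>"
  using assms unfolding FDP_def by (cases "card R = 0") (simp_all add: divide_le_eq)

lemma FNP_le:
  assumes "real (card (F - R)) \<le> \<delta> * real (card F)" "0 \<le> \<delta>"
  shows "FNP F R \<le> \<delta>"
  using assms unfolding FNP_def by (cases "card F = 0") (simp_all add: divide_le_eq)

lemma FDP_le_1: "FDP F R \<le> 1"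
proof (cases "finite R")
  case True
  then show ?thesis by (intro FDP_le) (simp_all add: card_mono)
qed (simp add: FDP_def)

lemma FNP_le_1: "FNP F R \<le> 1"
proof (cases "finite F")
  case True
  then show ?thesis by (intro FNP_le) (simp_all add: card_mono)
qed (simp add: FNP_def)

text \<open>The k observations above t satisfy the BH condition at index k: at least half of the
  card F signals are among them, so \<Psi>(t) \<le> card F q / (2 n) \<le> k q / n.\<close>

lemma BH_rej_above_threshold:
  assumes anti: "antimono \<Psi>" and F: "F \<subseteq> {..<n}" "1 \<le> card F"
    and missed: "2 * card {i \<in> F. X i < t} \<le> card F"
    and thr: "\<Psi> t \<le> real (card F) * q / (2 * real n)" and q: "0 \<le> q"
  shows "{j. j < n \<and> t \<le> X j} \<subseteq> BH_rej \<Psi> q n X"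
    and "real (card F) \<le> 2 * real (card (BH_rej \<Psi> q n X))"
proof -
  let ?T = "{j. j < n \<and> t \<le> X j}"
  have "finite F" using F(1) finite_subset by blast
  then have "card F = card {i \<in> F. X i < t} + card {i \<in> F. t \<le> X i}"
    by (subst card_Un_disjoint[symmetric]) (auto intro: arg_cong[where f = card])
  moreover have "card {i \<in> F. t \<le> X i} \<le> card ?T" using F(1) by (intro card_mono) auto
  ultimately have T: "real (card F) \<le> 2 * real (card ?T)" using missed by linarith
  have "real (card F) * q / (2 * real n) \<le> real (card ?T) * q / real n"
    using mult_right_mono[OF T q] by (auto simp: divide_simps mult_ac)
  then show R: "?T \<subseteq> BH_rej \<Psi> q n X"
    using T F(2) thr by (intro BH_rej_superset[OF anti refl]) linarith+
  have "card ?T \<le> card (BH_rej \<Psi> q n X)"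
    using R by (intro card_mono) (auto intro: finite_subset[OF BH_rej_subset])
  then show "real (card F) \<le> 2 * real (card (BH_rej \<Psi> q n X))" using T by linarith
qed

lemma FNP_BH_le:
  assumes anti: "antimono \<Psi>" and F: "F \<subseteq> {..<n}" "1 \<le> card F"
    and \<delta>: "\<delta> \<le> 1 / 2" and missed: "real (card {i \<in> F. X i < t}) \<le> \<delta> * real (card F)"
    and thr: "\<Psi> t \<le> real (card F) * q / (2 * real n)" and q: "0 \<le> q"
  shows "FNP F (BH_rej \<Psi> q n X) \<le> \<delta>"
proof (rule FNP_le)
  have "\<delta> * real (card F) \<le> real (card F) / 2" using mult_right_mono[OF \<delta>, of "real (card F)"] by simp
  then have "2 * card {i \<in> F. X i < t} \<le> card F" using missed by linarith
  then have "{j. j < n \<and> t \<le> X j} \<subseteq> BH_rej \<Psi> q n X"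
    by (rule BH_rej_above_threshold(1)[OF anti F _ thr q])
  then have "F - BH_rej \<Psi> q n X \<subseteq> {i \<in> F. X i < t}"
    using F(1) by (auto simp: not_less)
  then have "card (F - BH_rej \<Psi> q n X) \<le> card {i \<in> F. X i < t}"
    using F(1) by (intro card_mono) (auto intro: finite_subset)
  then show "real (card (F - BH_rej \<Psi> q n X)) \<le> \<delta> * real (card F)" using missed by linarith
  have "0 \<le> \<delta> * real (card F)" using missed of_nat_0_le_iff order_trans by blast
  then show "0 \<le> \<delta>" using F(2) by (simp add: zero_le_mult_iff)
qed

text \<open>By self-consistency, V \<ge> c false rejections would violate the hypothesis at v = V.\<close>

lemma FDP_BH_le:
  assumes anti: "antimono \<Psi>" and F: "F \<subseteq> {..<n}" "1 \<le> card F"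
    and \<delta>: "0 \<le> \<delta>" "\<delta> \<le> 1 / 2" and missed: "real (card {i \<in> F. X i < t}) \<le> \<delta> * real (card F)"
    and thr: "\<Psi> t \<le> real (card F) * q / (2 * real n)" and q: "0 \<le> q"
    and c: "2 * (real c - 1) \<le> \<delta> * real (card F)"
    and nulls: "\<And>v. v \<in> {c..n} \<Longrightarrow>
       card {j \<in> {..<n} - F. \<Psi> (X j) \<le> real (card F + v) * q / real n} < v"
  shows "FDP F (BH_rej \<Psi> q n X) \<le> \<delta>"
proof (rule FDP_le[OF _ \<delta>(1)])
  let ?R = "BH_rej \<Psi> q n X"
  let ?V = "card (?R - F)"
  have "\<delta> * real (card F) \<le> real (card F) / 2" using mult_right_mono[OF \<delta>(2), of "real (card F)"] by simp
  then have "2 * card {i \<in> F. X i < t} \<le> card F" using missed by linarith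
  then have R: "real (card F) \<le> 2 * real (card ?R)"
    by (rule BH_rej_above_threshold(2)[OF anti F _ thr q])
  have "?V \<le> card {..<n}" using BH_rej_subset[of \<Psi> q n X] by (intro card_mono) auto
  moreover have "?V \<le> card {j \<in> {..<n} - F. \<Psi> (X j) \<le> real (card F + ?V) * q / real n}"
    using F(1) by (intro card_false_rejections_le[OF anti _ q]) (auto intro: finite_subset)
  ultimately have "\<not> c \<le> ?V" using nulls[of ?V] by fastforce
  then have "real ?V + 1 \<le> real c" by (simp add: of_nat_add[symmetric] del: of_nat_add)
  then have "2 * real ?V \<le> \<delta> * real (card F)" using c by argo
  also have "\<dots> \<le> \<delta> * (2 * real (card ?R))" using R \<delta>(1) by (rule mult_left_mono)
  finally show "real ?V \<le> \<delta> * real (card ?R)" by linarith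
qed

section \<open>Binomial tail estimates\<close>

lemma choose_mult_fact_le_power: "real (N choose v) * fact v \<le> real N ^ v"
proof (cases "v \<le> N")
  case True
  have "fact v * fact (N - v) * (N choose v) = (fact N :: nat)"
    by (rule binomial_fact_lemma[OF True])
  then have "fact v * (N choose v) = fact N div fact (N - v)"
    by (metis mult.assoc mult.commute nonzero_mult_div_cancel_left fact_nonzero)
  also have "\<dots> \<le> N ^ v" by (rule fact_div_fact_le_pow[OF True])
  finally have "real (fact v * (N choose v)) \<le> real (N ^ v)" by (simp only: of_nat_le_iff)
  then show ?thesis by (simp add: mult.commute)
qed (simp add: binomial_eq_0)

lemma power_div_fact_le_exp: "x ^ v / fact v \<le> exp x" if "0 \<le> x" for x :: real
proof -
  have s: "(\<lambda>n. x ^ n /\<^sub>R fact n) sums exp x" by (rule exp_converges)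
  have "(\<Sum>n\<in>{v}. x ^ n /\<^sub>R fact n) \<le> (\<Sum>n. x ^ n /\<^sub>R fact n)"
    using s that by (intro sum_le_suminf) (auto simp: sums_summable)
  then show ?thesis using sums_unique[OF s] by (simp add: divide_inverse mult.commute)
qed

lemma choose_mult_power_le_exp_power:
  fixes x L :: real
  assumes x: "0 \<le> x" and L: "real N * x \<le> L * real v"
  shows "real (N choose v) * x ^ v \<le> (exp 1 * L) ^ v"
proof (cases "v = 0")
  case False
  have "0 \<le> L * real v" using L x by (metis mult_nonneg_nonneg of_nat_0_le_iff order_trans)
  then have "0 \<le> L" using False by (simp add: zero_le_mult_iff)
  have "real (N choose v) * x ^ v = (real (N choose v) * fact v) * x ^ v / fact v" by simp
  also have "\<dots> \<le> real N ^ v * x ^ v / fact v"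
    by (intro divide_right_mono mult_right_mono choose_mult_fact_le_power) (auto simp: x)
  also have "\<dots> = (real N * x) ^ v / fact v" by (simp add: power_mult_distrib)
  also have "\<dots> \<le> (L * real v) ^ v / fact v"
    by (intro divide_right_mono power_mono L) (auto simp: x)
  also have "\<dots> = L ^ v * (real v ^ v / fact v)" by (simp add: power_mult_distrib)
  also have "\<dots> \<le> L ^ v * exp (real v)"
    using \<open>0 \<le> L\<close> by (intro mult_left_mono power_div_fact_le_exp) auto
  also have "\<dots> = (exp 1 * L) ^ v"
    by (simp add: power_mult_distrib exp_of_nat_mult[symmetric] mult.commute)
  finally show ?thesis .
qed simp

lemma le_of_le_power:
  fixes a y :: real
  assumes "a \<le> 1" "a \<le> y ^ v" "0 \<le> y" "1 \<le> v"
  shows "a \<le> y"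
proof (cases "y \<le> 1")
  case True
  then have "y ^ v \<le> y" using assms by (metis One_nat_def power_decreasing power_one_right)
  then show ?thesis using assms(2) by linarith
qed (use assms in linarith)

lemma sum_power_atLeastAtMost_le:
  fixes y :: real
  assumes y: "0 \<le> y" "y \<le> 1/2" and c: "1 \<le> c"
  shows "(\<Sum>v\<in>{c..n}. y ^ v) \<le> 2 * y"
proof -
  have "(\<Sum>v\<in>{c..n}. y ^ v) \<le> (\<Sum>v\<in>{1..n}. y ^ v)"
    using c y by (intro sum_mono2) auto
  also have "\<dots> = (\<Sum>v<n. y ^ Suc v)"
    by (rule sum.reindex_bij_witness[where i = Suc and j = "\<lambda>v. v - 1"]) auto
  also have "\<dots> = (\<Sum>v<n. y * y ^ v)" by simp
  also have "\<dots> = y * ((1 - y ^ n) / (1 - y))"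
    using y by (simp add: sum_distrib_left[symmetric] sum_gp_strict)
  also have "\<dots> \<le> y * (1 / (1 - y))"
    using y by (intro mult_left_mono divide_right_mono) auto
  also have "\<dots> \<le> y * 2" using y by (intro mult_left_mono) (auto simp: field_simps)
  finally show ?thesis by simp
qed

section \<open>Probability estimates\<close>

lemma sets_PiM_card_ge:
  fixes E :: "'i \<Rightarrow> 'a set"
  assumes J: "finite J" "J \<subseteq> I" and E: "\<And>i. i \<in> J \<Longrightarrow> E i \<in> sets (M i)"
  shows "{x \<in> space (PiM I M). v \<le> card {i \<in> J. x i \<in> E i}} \<in> sets (PiM I M)"
proof -
  let ?f = "\<lambda>x. (\<Sum>i\<in>J. indicator (E i) (x i)) :: real"
  have f: "?f \<in> borel_measurable (PiM I M)"
    using J E by (intro borel_measurable_sum measurable_compose[OF measurable_component_singleton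
        borel_measurable_indicator]) auto
  have card_eq: "?f x = real (card {i \<in> J. x i \<in> E i})" for x
    using J(1) by (simp add: indicator_def sum.If_cases Int_def)
  have "{x \<in> space (PiM I M). v \<le> card {i \<in> J. x i \<in> E i}} = ?f -` {real v..} \<inter> space (PiM I M)"
    unfolding card_eq by auto
  also have "\<dots> \<in> sets (PiM I M)" by (rule measurable_sets[OF f]) simp
  finally show ?thesis .
qed

lemma measure_PiM_prod_emb_le:
  assumes I: "finite I" and M: "\<And>i. i \<in> I \<Longrightarrow> prob_space (M i)" and S: "S \<subseteq> I"
    and E: "\<And>i. i \<in> S \<Longrightarrow> E i \<in> sets (M i)" and p: "\<And>i. i \<in> S \<Longrightarrow> measure (M i) (E i) \<le> p"
  shows "measure (PiM I M) (prod_emb I M S (Pi\<^sub>E S E)) \<le> p ^ card S"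
proof -
  interpret P: prob_space "PiM I M" using M by (intro prob_space_PiM) auto
  have finS: "finite S" using I S finite_subset by blast
  have "emeasure (PiM I M) (prod_emb I M S (Pi\<^sub>E S E)) = (\<Prod>i\<in>S. emeasure (M i) (E i))"
    using finS S E M by (intro emeasure_PiM_emb) auto
  also have "\<dots> = (\<Prod>i\<in>S. ennreal (measure (M i) (E i)))"
    using S M by (intro prod.cong refl) (simp add: subset_iff finite_measure.emeasure_eq_measure prob_space_def)
  also have "\<dots> = ennreal (\<Prod>i\<in>S. measure (M i) (E i))"
    by (rule prod_ennreal) auto
  finally have "measure (PiM I M) (prod_emb I M S (Pi\<^sub>E S E)) = (\<Prod>i\<in>S. measure (M i) (E i))"
    by (simp add: P.emeasure_eq_measure prod_nonneg)
  also have "\<dots> \<le> (\<Prod>i\<in>S. p)" using p by (intro prod_mono) auto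
  finally show ?thesis using finS by simp
qed

text \<open>Union bound over the v-element subsets of J.\<close>

lemma measure_PiM_card_ge_le:
  assumes I: "finite I" and M: "\<And>i. i \<in> I \<Longrightarrow> prob_space (M i)" and J: "J \<subseteq> I"
    and E: "\<And>i. i \<in> J \<Longrightarrow> E i \<in> sets (M i)" and p: "\<And>i. i \<in> J \<Longrightarrow> measure (M i) (E i) \<le> p"
  shows "measure (PiM I M) {x \<in> space (PiM I M). v \<le> card {i \<in> J. x i \<in> E i}}
           \<le> real (card J choose v) * p ^ v"
proof -
  let ?P = "PiM I M"
  let ?SS = "{S. S \<subseteq> J \<and> card S = v}"
  let ?A = "\<lambda>S. prod_emb I M S (Pi\<^sub>E S E)"
  have finJ: "finite J" using I J finite_subset by blast
  interpret P: prob_space ?P using M by (intro prob_space_PiM) auto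
  have A_eq: "?A S = {x \<in> space ?P. \<forall>i\<in>S. x i \<in> E i}" if "S \<subseteq> I" for S
    using that by (auto simp: prod_emb_def space_PiM PiE_iff extensional_def)
  have "{x \<in> space ?P. v \<le> card {i \<in> J. x i \<in> E i}} \<subseteq> (\<Union>S\<in>?SS. ?A S)"
  proof
    fix x assume x: "x \<in> {x \<in> space ?P. v \<le> card {i \<in> J. x i \<in> E i}}"
    then obtain S where S: "S \<subseteq> {i \<in> J. x i \<in> E i}" "card S = v"
      by (auto elim: obtain_subset_with_card_n)
    then have SI: "S \<subseteq> I" using J by auto
    then have "x \<in> ?A S" unfolding A_eq[OF SI] using S x by auto
    then show "x \<in> (\<Union>S\<in>?SS. ?A S)" using S by auto
  qed
  moreover have AS: "?A S \<in> sets ?P" if "S \<in> ?SS" for S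
    using that finJ J E by (intro sets_PiM_I) (auto intro: finite_subset)
  moreover have finSS: "finite ?SS" using finJ by auto
  ultimately have "measure ?P {x \<in> space ?P. v \<le> card {i \<in> J. x i \<in> E i}} \<le> measure ?P (\<Union>S\<in>?SS. ?A S)"
    by (intro P.finite_measure_mono) auto
  also have "\<dots> \<le> (\<Sum>S\<in>?SS. measure ?P (?A S))"
    using AS finSS by (intro measure_UNION_le) auto
  also have "\<dots> \<le> (\<Sum>S\<in>?SS. p ^ v)"
  proof (rule sum_mono)
    fix S assume S: "S \<in> ?SS"
    then have "measure ?P (?A S) \<le> p ^ card S"
      using J E p by (intro measure_PiM_prod_emb_le[OF I]) (auto intro: M)
    then show "measure ?P (?A S) \<le> p ^ v" using S by simp
  qed
  also have "\<dots> = real (card J choose v) * p ^ v" using n_subsets[OF finJ, of v] by simp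
  finally show ?thesis .
qed

lemma measure_le_of_subset:
  assumes "finite_measure M" "A \<in> sets M" "{\<omega> \<in> space M. P \<omega>} \<subseteq> A"
  shows "measure M {\<omega> \<in> space M. P \<omega>} \<le> measure M A"
proof (cases "{\<omega> \<in> space M. P \<omega>} \<in> sets M")
  case True
  then show ?thesis using assms by (intro finite_measure.finite_measure_mono) auto
qed (simp add: measure_notin_sets)

text \<open>No measurability of f is needed: a non-integrable function has integral 0.\<close>

lemma integral_le_of_exceptional_set:
  fixes f :: "'a \<Rightarrow> real"
  assumes M: "prob_space M" and A: "A \<in> sets M" and d: "0 \<le> d"
    and f: "\<And>\<omega>. \<omega> \<in> space M \<Longrightarrow> f \<omega> \<le> 1"
    and g: "\<And>\<omega>. \<omega> \<in> space M \<Longrightarrow> \<omega> \<notin> A \<Longrightarrow> f \<omega> \<le> d"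
  shows "(\<integral>\<omega>. f \<omega> \<partial>M) \<le> d + measure M A"
proof -
  interpret prob_space M by (rule M)
  have int: "integrable M (\<lambda>\<omega>. d + indicator A \<omega>)"
    using A by (intro Bochner_Integration.integrable_add integrable_real_indicator) (auto simp: emeasure_eq_measure)
  have "(\<integral>\<omega>. f \<omega> \<partial>M) \<le> (\<integral>\<omega>. d + indicator A \<omega> \<partial>M)"
  proof (cases "integrable M f")
    case True
    show ?thesis
    proof (rule integral_mono[OF True int])
      fix \<omega> assume "\<omega> \<in> space M"
      then show "f \<omega> \<le> d + indicator A \<omega>" using f[of \<omega>] g[of \<omega>] d by (cases "\<omega> \<in> A") simp_all
    qed
  next
    case False
    then show ?thesis using d by (simp add: not_integrable_integral_eq integral_nonneg)
  qed
  also have "\<dots> = d + measure M A"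
    using A by (subst Bochner_Integration.integral_add)
      (auto intro!: integrable_real_indicator simp: emeasure_eq_measure prob_space)
  finally show ?thesis .
qed

section \<open>The sparse model\<close>

definition sparse_model_given :: "real measure \<Rightarrow> nat \<Rightarrow> nat set \<Rightarrow> real \<Rightarrow> (nat \<Rightarrow> real) measure" where
  "sparse_model_given D n F \<mu> = PiM {..<n} (\<lambda>i. distr D borel (\<lambda>x. x + (if i \<in> F then \<mu> else 0)))"

lemma sets_sparse_model_given: "sets (sparse_model_given D n F \<mu>) = sets (PiM {..<n} (\<lambda>_. borel))"
  unfolding sparse_model_given_def by (intro sets_PiM_cong) auto

lemma space_sparse_model_given:
  "space (sparse_model_given D n F \<mu>) = space (PiM {..<n} (\<lambda>_. borel :: real measure))"
  using sets_sparse_model_given by (rule sets_eq_imp_space_eq)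

lemma measurable_Pair_sparse_model_given:
  "F \<subseteq> {..<n} \<Longrightarrow> (\<lambda>x. (F, x)) \<in> sparse_model_given D n F \<mu> \<rightarrow>\<^sub>M
     count_space (Pow {..<n}) \<Otimes>\<^sub>M PiM {..<n} (\<lambda>_. borel :: real measure)"
  by (intro measurable_Pair measurable_const measurable_ident_sets sets_sparse_model_given) auto

lemma sparse_model_eq_bind:
  "sparse_model D n m \<mu> = uniform_count_measure {A. A \<subseteq> {..<n} \<and> card A = m} \<bind>
     (\<lambda>F. distr (sparse_model_given D n F \<mu>) (count_space (Pow {..<n}) \<Otimes>\<^sub>M PiM {..<n} (\<lambda>_. borel))
                 (\<lambda>x. (F, x)))"
  unfolding sparse_model_def sparse_model_given_def ..

lemma nonempty_subsets_with_card:
  "m \<le> n \<Longrightarrow> {A. A \<subseteq> {..<n} \<and> card A = m} \<noteq> {}"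
  by (metis (mono_tags, lifting) card_lessThan empty_Collect_eq obtain_subset_with_card_n)

context real_distribution
begin

lemma measure_distr_shift:
  "A \<in> sets borel \<Longrightarrow> measure (distr M borel (\<lambda>x. x + c)) A = measure M {x. x + c \<in> A}"
  by (subst measure_distr) (auto simp: vimage_def)

lemma prob_space_distr_shift: "prob_space (distr M borel (\<lambda>x. x + c))"
  by (intro prob_space_distr) simp

lemma prob_space_sparse_model_given: "prob_space (sparse_model_given M n F \<mu>)"
  unfolding sparse_model_given_def by (intro prob_space_PiM prob_space_distr_shift)

lemma sparse_model_given_in_prob_algebra:
  fixes n :: nat
  defines "\<Omega> \<equiv> count_space (Pow {..<n}) \<Otimes>\<^sub>M PiM {..<n} (\<lambda>_. borel :: real measure)"
  shows "(\<lambda>F. distr (sparse_model_given M n F \<mu>) \<Omega> (\<lambda>x. (F, x)))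
           \<in> uniform_count_measure {A. A \<subseteq> {..<n} \<and> card A = m} \<rightarrow>\<^sub>M prob_algebra \<Omega>"
  unfolding \<Omega>_def
  by (subst measurable_cong_sets[OF sets_uniform_count_measure_count_space refl])
     (auto simp: space_prob_algebra intro!: prob_space.prob_space_distr prob_space_sparse_model_given
        measurable_Pair_sparse_model_given)

lemma prob_space_sparse_model:
  assumes "m \<le> n"
  shows "prob_space (sparse_model M n m \<mu>)"
  unfolding sparse_model_eq_bind
proof (rule prob_space_bind'[OF _ sparse_model_given_in_prob_algebra[where m = m]])
  show "uniform_count_measure {A. A \<subseteq> {..<n} \<and> card A = m}
          \<in> space (prob_algebra (uniform_count_measure {A. A \<subseteq> {..<n} \<and> card A = m}))"
    using nonempty_subsets_with_card[OF assms]
    by (simp add: space_prob_algebra prob_space_uniform_count_measure)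
qed

lemma measure_sparse_model_given_card_ge_le:
  assumes J: "J \<subseteq> {..<n}" and E: "E \<in> sets borel"
    and p: "\<And>i. i \<in> J \<Longrightarrow> measure M {x. x + (if i \<in> F then \<mu> else 0) \<in> E} \<le> p"
  shows "measure (sparse_model_given M n F \<mu>)
           {X \<in> space (sparse_model_given M n F \<mu>). v \<le> card {i \<in> J. X i \<in> E}}
         \<le> real (card J choose v) * p ^ v"
  unfolding sparse_model_given_def
proof (rule measure_PiM_card_ge_le[OF finite_lessThan prob_space_distr_shift J])
  show "E \<in> sets (distr M borel (\<lambda>x. x + (if i \<in> F then \<mu> else 0)))" for i
    using E by simp
  show "measure (distr M borel (\<lambda>x. x + (if i \<in> F then \<mu> else 0))) E \<le> p" if "i \<in> J" for i
    using p[OF that] measure_distr_shift[OF E] by simp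
qed

lemma measure_sparse_model_le:
  assumes mn: "m \<le> n" and b: "0 \<le> b"
    and A: "A \<in> sets (count_space (Pow {..<n}) \<Otimes>\<^sub>M PiM {..<n} (\<lambda>_. borel))"
    and sections: "\<And>F. F \<subseteq> {..<n} \<Longrightarrow> card F = m \<Longrightarrow>
       measure (sparse_model_given M n F \<mu>) ((\<lambda>x. (F, x)) -` A \<inter> space (sparse_model_given M n F \<mu>)) \<le> b"
  shows "measure (sparse_model M n m \<mu>) A \<le> b"
proof -
  define S where "S = {A. A \<subseteq> {..<n} \<and> card A = m}"
  define \<Omega> where "\<Omega> = count_space (Pow {..<n}) \<Otimes>\<^sub>M PiM {..<n} (\<lambda>_. borel :: real measure)"
  define K where "K = (\<lambda>F. distr (sparse_model_given M n F \<mu>) \<Omega> (\<lambda>x. (F, x)))"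
  have S: "S \<noteq> {}" "finite S" using nonempty_subsets_with_card[OF mn] unfolding S_def by auto
  have K: "K \<in> uniform_count_measure S \<rightarrow>\<^sub>M subprob_algebra \<Omega>"
    using measurable_prob_algebraD[OF sparse_model_given_in_prob_algebra[where m = m]]
    unfolding K_def S_def \<Omega>_def .
  have "emeasure (sparse_model M n m \<mu>) A = (\<integral>\<^sup>+F. emeasure (K F) A \<partial>uniform_count_measure S)"
    unfolding sparse_model_eq_bind using S K A
    by (subst emeasure_bind[where N = \<Omega>]) (auto simp: space_uniform_count_measure S_def \<Omega>_def K_def)
  also have "\<dots> \<le> (\<integral>\<^sup>+F. ennreal b \<partial>uniform_count_measure S)"
  proof (rule nn_integral_mono)
    fix F assume "F \<in> space (uniform_count_measure S)"
    then have F: "F \<subseteq> {..<n}" "card F = m" by (simp_all add: space_uniform_count_measure S_def)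
    have "emeasure (K F) A = emeasure (sparse_model_given M n F \<mu>) ((\<lambda>x. (F, x)) -` A \<inter> space (sparse_model_given M n F \<mu>))"
      unfolding K_def using A measurable_Pair_sparse_model_given[OF F(1), of M \<mu>]
      by (subst emeasure_distr) (auto simp: \<Omega>_def)
    also have "\<dots> \<le> ennreal b"
      using sections[OF F] prob_space_sparse_model_given
      by (simp add: finite_measure.emeasure_eq_measure prob_space_def ennreal_leI)
    finally show "emeasure (K F) A \<le> ennreal b" .
  qed
  also have "\<dots> = ennreal b"
    using prob_space.emeasure_space_1[OF prob_space_uniform_count_measure[OF S(2,1)]] by simp
  finally show ?thesis
    using b prob_space_sparse_model[OF mn] by (simp add: finite_measure.emeasure_eq_measure prob_space_def)
qed

text \<open>Events of the sparse model are controlled through their sections at the signal sets F;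
  the event itself need not be measurable (the BH events are never shown to be).\<close>

lemma sparse_model_event_le:
  fixes P :: "nat set \<times> (nat \<Rightarrow> real) \<Rightarrow> bool"
  assumes mn: "m \<le> n" and b: "0 \<le> b"
    and sections: "\<And>F. F \<subseteq> {..<n} \<Longrightarrow> card F = m \<Longrightarrow>
       \<exists>B \<in> sets (PiM {..<n} (\<lambda>_. borel)). measure (sparse_model_given M n F \<mu>) B \<le> b \<and>
          (\<forall>X \<in> space (PiM {..<n} (\<lambda>_. borel)). P (F, X) \<longrightarrow> X \<in> B)"
  shows "\<exists>A \<in> sets (sparse_model M n m \<mu>). {\<omega> \<in> space (sparse_model M n m \<mu>). P \<omega>} \<subseteq> A
           \<and> measure (sparse_model M n m \<mu>) A \<le> b"
proof -
  define S where "S = {A. A \<subseteq> {..<n} \<and> card A = m}"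
  let ?PS = "space (PiM {..<n} (\<lambda>_. borel :: real measure))"
  let ?M = "sparse_model M n m \<mu>"
  have "\<forall>F\<in>S. \<exists>B. B \<in> sets (PiM {..<n} (\<lambda>_. borel)) \<and> measure (sparse_model_given M n F \<mu>) B \<le> b \<and>
          (\<forall>X \<in> ?PS. P (F, X) \<longrightarrow> X \<in> B)"
    using sections unfolding S_def Bex_def by blast
  then obtain B where "\<forall>F\<in>S. B F \<in> sets (PiM {..<n} (\<lambda>_. borel)) \<and>
      measure (sparse_model_given M n F \<mu>) (B F) \<le> b \<and> (\<forall>X \<in> ?PS. P (F, X) \<longrightarrow> X \<in> B F)"
    by metis
  then have B: "\<And>F. F \<in> S \<Longrightarrow> B F \<in> sets (PiM {..<n} (\<lambda>_. borel))"
      "\<And>F. F \<in> S \<Longrightarrow> measure (sparse_model_given M n F \<mu>) (B F) \<le> b"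
      "\<And>F X. F \<in> S \<Longrightarrow> X \<in> ?PS \<Longrightarrow> P (F, X) \<Longrightarrow> X \<in> B F"
    by auto
  have sets_M: "sets ?M = sets (count_space (Pow {..<n}) \<Otimes>\<^sub>M PiM {..<n} (\<lambda>_. borel))"
    unfolding sparse_model_eq_bind
    using nonempty_subsets_with_card[OF mn] measurable_prob_algebraD[OF sparse_model_given_in_prob_algebra[where m = m]]
    by (intro sets_bind) (auto simp: space_uniform_count_measure dest: measurable_space simp: space_subprob_algebra)
  define A where "A = (\<Union>F\<in>S. {F} \<times> B F) \<union> ((Pow {..<n} - S) \<times> ?PS)"
  have A: "A \<in> sets (count_space (Pow {..<n}) \<Otimes>\<^sub>M PiM {..<n} (\<lambda>_. borel))"
    unfolding A_def using B(1) by (intro sets.Un sets.finite_UN pair_measureI) (auto simp: S_def)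
  have "{\<omega> \<in> space ?M. P \<omega>} \<subseteq> A"
    using B(3) sets_eq_imp_space_eq[OF sets_M] by (auto simp: A_def space_pair_measure)
  moreover have "measure ?M A \<le> b"
  proof (rule measure_sparse_model_le[OF mn b A])
    fix F assume "F \<subseteq> {..<n}" "card F = m"
    then have F: "F \<in> S" unfolding S_def by simp
    have "(\<lambda>x. (F, x)) -` A \<inter> space (sparse_model_given M n F \<mu>) = B F"
      using F sets.sets_into_space[OF B(1)[OF F]] by (auto simp: A_def space_sparse_model_given)
    then show "measure (sparse_model_given M n F \<mu>) ((\<lambda>x. (F, x)) -` A \<inter> space (sparse_model_given M n F \<mu>)) \<le> b"
      using B(2)[OF F] by simp
  qed
  ultimately show ?thesis using A sets_M by auto
qed
end

section \<open>Error probabilities of BH under a survival function\<close>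

locale survival_function = real_distribution D for D :: "real measure" +
  fixes \<Psi> :: "real \<Rightarrow> real"
  assumes survival_eq: "\<Psi> y = measure D {y..}"
begin

lemma antimono_survival: "antimono \<Psi>"
  by (intro antimonoI) (auto simp: survival_eq intro!: finite_measure_mono)

lemma survival_eq_1_minus: "\<Psi> y = 1 - measure D {..<y}"
proof -
  have "{y..} = space D - {..<y}" by auto
  then show ?thesis using prob_compl[of "{..<y}"] by (simp add: survival_eq)
qed

lemma tendsto_measure_lessThan_at_bot: "((\<lambda>x. measure D {..<x}) \<longlongrightarrow> 0) at_bot"
proof (rule tendsto_sandwich[OF _ _ tendsto_const cdf_lim_at_bot])
  show "\<forall>\<^sub>F x in at_bot. measure D {..<x} \<le> cdf D x"
    by (intro always_eventually allI) (auto simp: cdf_def intro!: finite_measure_mono)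
qed simp

lemma tendsto_survival_at_bot: "(\<Psi> \<longlongrightarrow> 1) at_bot"
  using tendsto_diff[OF tendsto_const tendsto_measure_lessThan_at_bot, of 1]
  by (simp add: survival_eq_1_minus[abs_def])

lemma tendsto_measure_below_shift_gap:
  assumes \<gamma>: "0 < \<gamma>" and s: "0 < s" "s < r"
  shows "(\<lambda>n::nat. measure D {..< (\<gamma> * s * ln (real n)) powr (1/\<gamma>) - (\<gamma> * r * ln (real n)) powr (1/\<gamma>)})
           \<longlonglongrightarrow> 0"
proof -
  let ?f = "\<lambda>n::nat. (\<gamma> * ln (real n)) powr (1/\<gamma>)"
  let ?k = "s powr (1/\<gamma>) - r powr (1/\<gamma>)"
  have "?k < 0" using s \<gamma> powr_less_mono2[of "1/\<gamma>" s r] by simp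
  moreover have "filterlim ?f at_top sequentially" using \<gamma> by real_asymp
  ultimately have "filterlim (\<lambda>n. ?k * ?f n) at_bot sequentially"
    by (intro filterlim_tendsto_neg_mult_at_bot[OF tendsto_const])
  from filterlim_compose[OF tendsto_measure_lessThan_at_bot this]
  have "(\<lambda>n. measure D {..< ?k * ?f n}) \<longlonglongrightarrow> 0" .
  moreover have "(\<gamma> * x * ln (real n)) powr (1/\<gamma>) = x powr (1/\<gamma>) * ?f n" if "0 \<le> x" for x n
  proof -
    have "0 \<le> ln (real n)" by (cases n) auto
    then show ?thesis using that \<gamma> powr_mult[of x "\<gamma> * ln (real n)" "1/\<gamma>"] by (simp add: mult_ac)
  qed
  ultimately show ?thesis using s by (simp add: left_diff_distrib)
qed

text \<open>P-values are super-uniform: P(\<Psi>(Y) \<le> u) \<le> u. For continuous \<Psi> the event is a closed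
  up-set, i.e. an interval [a, \<infinity>) of probability \<Psi>(a) \<le> u, or all of \<real>.\<close>

lemma prob_survival_le:
  assumes cont: "continuous_on UNIV \<Psi>" and u: "0 \<le> u"
  shows "measure D {x. \<Psi> x \<le> u} \<le> u"
proof -
  let ?A = "{x. \<Psi> x \<le> u}"
  have closed: "closed ?A" using cont by (intro closed_Collect_le continuous_on_const) auto
  consider "?A = {}" | "?A \<noteq> {}" "bdd_below ?A" | "\<not> bdd_below ?A"
    by (cases "?A = {}"; cases "bdd_below ?A") argo+
  then show ?thesis
  proof cases
    case 2
    define a where "a = Inf ?A"
    have a: "a \<in> ?A" unfolding a_def using closed_contains_Inf[OF 2 closed] .
    have A_eq: "?A = {a..}"
    proof safe
      fix x assume "\<Psi> x \<le> u"
      then show "a \<le> x" unfolding a_def using cInf_lower[OF _ 2(2)] by simp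
    next
      fix x assume "a \<le> x"
      then have "\<Psi> x \<le> \<Psi> a" by (rule antimonoD[OF antimono_survival])
      then show "\<Psi> x \<le> u" using a by simp
    qed
    have "measure D ?A = \<Psi> a" unfolding A_eq by (simp add: survival_eq)
    then show ?thesis using a by simp
  next
    case 3
    have le_u: "\<Psi> y \<le> u" for y
    proof -
      obtain x where "x \<in> ?A" "x < y"
        using 3 unfolding bdd_below_def by (auto simp: not_le)
      then show ?thesis using antimonoD[OF antimono_survival, of x y] by simp
    qed
    have "1 \<le> u"
      using le_u by (intro tendsto_le[OF trivial_limit_at_bot_linorder tendsto_const
          tendsto_survival_at_bot] always_eventually) simp
    then show ?thesis using prob_le_1[of ?A] by linarith
  qed (use u in simp)
qed

lemma prob_many_signals_below_le:
  assumes F: "F \<subseteq> {..<n}" and v: "1 \<le> v" "\<delta> * real (card F) \<le> real v" and \<delta>: "0 < \<delta>"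
  shows "measure (sparse_model_given D n F \<mu>)
           {X \<in> space (sparse_model_given D n F \<mu>). v \<le> card {i \<in> F. X i < t}}
         \<le> exp 1 * (measure D {..< t - \<mu>} / \<delta>)"
proof -
  let ?Q = "sparse_model_given D n F \<mu>"
  let ?p = "measure D {..< t - \<mu>}"
  have "measure D {x. x + (if i \<in> F then \<mu> else 0) \<in> {..<t}} = ?p" if "i \<in> F" for i
    using that by (intro arg_cong[where f = "measure D"]) auto
  then have "measure ?Q {X \<in> space ?Q. v \<le> card {i \<in> F. X i \<in> {..<t}}} \<le> real (card F choose v) * ?p ^ v"
    by (intro measure_sparse_model_given_card_ge_le[OF F]) simp_all
  also have "\<dots> \<le> (exp 1 * (?p / \<delta>)) ^ v"
  proof (rule choose_mult_power_le_exp_power)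
    have "real (card F) \<le> real v / \<delta>" using v \<delta> by (simp add: field_simps)
    then show "real (card F) * ?p \<le> ?p / \<delta> * real v"
      using mult_right_mono[of "real (card F)" "real v / \<delta>" ?p] by (simp add: mult.commute)
  qed simp
  finally have "measure ?Q {X \<in> space ?Q. v \<le> card {i \<in> F. X i < t}} \<le> (exp 1 * (?p / \<delta>)) ^ v"
    by simp
  from le_of_le_power[OF prob_space.prob_le_1[OF prob_space_sparse_model_given] this _ v(1)]
  show ?thesis using \<delta> by simp
qed

lemma sets_PiM_card_survival_le:
  fixes n :: nat
  assumes cont: "continuous_on UNIV \<Psi>" and J: "J \<subseteq> {..<n}"
  shows "{X \<in> space (PiM {..<n} (\<lambda>_. borel)). v \<le> card {j \<in> J. \<Psi> (X j) \<le> u}}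
           \<in> sets (PiM {..<n} (\<lambda>_. borel :: real measure))"
proof -
  have "{y. \<Psi> y \<le> u} \<in> sets borel"
    using borel_measurable_continuous_onI[OF cont] by measurable
  then have "{X \<in> space (PiM {..<n} (\<lambda>_. borel)). v \<le> card {j \<in> J. X j \<in> {y. \<Psi> y \<le> u}}}
               \<in> sets (PiM {..<n} (\<lambda>_. borel :: real measure))"
    using J by (intro sets_PiM_card_ge) (auto intro: finite_subset)
  then show ?thesis by (simp only: mem_Collect_eq)
qed

lemma prob_many_nulls_below_le:
  assumes cont: "continuous_on UNIV \<Psi>" and u: "0 \<le> u"
  shows "measure (sparse_model_given D n F \<mu>)
           {X \<in> space (sparse_model_given D n F \<mu>). v \<le> card {j \<in> {..<n} - F. \<Psi> (X j) \<le> u}}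
         \<le> real (card ({..<n} - F) choose v) * u ^ v"
proof -
  have E: "{y. \<Psi> y \<le> u} \<in> sets borel"
    using borel_measurable_continuous_onI[OF cont] by measurable
  have "measure (sparse_model_given D n F \<mu>)
      {X \<in> space (sparse_model_given D n F \<mu>). v \<le> card {j \<in> {..<n} - F. X j \<in> {y. \<Psi> y \<le> u}}}
      \<le> real (card ({..<n} - F) choose v) * u ^ v"
    using prob_survival_le[OF cont u] by (intro measure_sparse_model_given_card_ge_le[OF _ E]) auto
  then show ?thesis by simp
qed

lemma prob_many_nulls_below_BH_level_le:
  assumes cont: "continuous_on UNIV \<Psi>" and q: "0 \<le> q" and \<delta>: "0 < \<delta>"
    and v: "\<delta> * real (card F) \<le> 2 * real v"
  shows "measure (sparse_model_given D n F \<mu>) {X \<in> space (sparse_model_given D n F \<mu>).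
             v \<le> card {j \<in> {..<n} - F. \<Psi> (X j) \<le> real (card F + v) * q / real n}}
         \<le> (exp 1 * ((1 + 2 / \<delta>) * q)) ^ v"
proof -
  let ?u = "real (card F + v) * q / real n"
  have u: "0 \<le> ?u" using q by simp
  have "measure (sparse_model_given D n F \<mu>) {X \<in> space (sparse_model_given D n F \<mu>).
          v \<le> card {j \<in> {..<n} - F. \<Psi> (X j) \<le> ?u}} \<le> real (card ({..<n} - F) choose v) * ?u ^ v"
    by (rule prob_many_nulls_below_le[OF cont u])
  also have "\<dots> \<le> (exp 1 * ((1 + 2 / \<delta>) * q)) ^ v"
  proof (rule choose_mult_power_le_exp_power[OF u])
    have "real (card ({..<n} - F)) * ?u \<le> real n * ?u"
      using card_mono[of "{..<n}" "{..<n} - F"] u by (intro mult_right_mono) auto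
    also have "\<dots> \<le> real (card F + v) * q" using q by (cases "n = 0") simp_all
    also have "\<dots> \<le> ((1 + 2 / \<delta>) * real v) * q"
    proof (rule mult_right_mono[OF _ q])
      have "real (card F) \<le> 2 / \<delta> * real v" using v \<delta> by (simp add: field_simps)
      then show "real (card F + v) \<le> (1 + 2 / \<delta>) * real v" by (simp add: algebra_simps)
    qed
    finally show "real (card ({..<n} - F)) * ?u \<le> (1 + 2 / \<delta>) * q * real v"
      by (simp add: mult_ac)
  qed
  finally show ?thesis .
qed

lemma prob_BH_null_excess_le:
  assumes cont: "continuous_on UNIV \<Psi>" and q: "0 \<le> q" and \<delta>: "0 < \<delta>"
    and c: "1 \<le> c" "\<delta> * real (card F) \<le> 2 * real c"
  shows "measure (sparse_model_given D n F \<mu>)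
           (\<Union>v\<in>{c..n}. {X \<in> space (sparse_model_given D n F \<mu>).
              v \<le> card {j \<in> {..<n} - F. \<Psi> (X j) \<le> real (card F + v) * q / real n}})
         \<le> 2 * (exp 1 * ((1 + 2 / \<delta>) * q))"
    (is "measure ?Q (\<Union>v\<in>{c..n}. ?H v) \<le> 2 * ?\<rho>")
proof (cases "?\<rho> \<le> 1/2")
  case True
  have H: "?H v \<in> sets ?Q" if "v \<in> {c..n}" for v
    unfolding sets_sparse_model_given space_sparse_model_given
    by (rule sets_PiM_card_survival_le[OF cont]) auto
  have "measure ?Q (\<Union>v\<in>{c..n}. ?H v) \<le> (\<Sum>v\<in>{c..n}. measure ?Q (?H v))"
    by (rule measure_UNION_le[OF finite_atLeastAtMost H])
  also have "\<dots> \<le> (\<Sum>v\<in>{c..n}. ?\<rho> ^ v)"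
  proof (rule sum_mono)
    fix v assume "v \<in> {c..n}"
    then have "\<delta> * real (card F) \<le> 2 * real v" using c(2) by auto
    then show "measure ?Q (?H v) \<le> ?\<rho> ^ v"
      by (rule prob_many_nulls_below_BH_level_le[OF cont q \<delta>])
  qed
  also have "\<dots> \<le> 2 * ?\<rho>" using True q \<delta> c(1) by (intro sum_power_atLeastAtMost_le) auto
  finally show ?thesis .
next
  case False
  then show ?thesis
    using prob_space.prob_le_1[OF prob_space_sparse_model_given, of n F \<mu> "\<Union>v\<in>{c..n}. ?H v"]
    by linarith
qed

text \<open>MB is the event that more than \<delta> card F signals lie below t; HB is the event that for
  some v \<ge> c, with c about \<delta> card F / 2, at least v null P-values lie below (card F + v) q / n.\<close>

lemma BH_error_events_given:
  assumes cont: "continuous_on UNIV \<Psi>" and F: "F \<subseteq> {..<n}" "1 \<le> card F"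
    and q: "0 \<le> q" and \<delta>: "0 < \<delta>" "\<delta> \<le> 1/2"
    and thr: "\<Psi> t \<le> real (card F) * q / (2 * real n)"
  obtains MB HB where "MB \<in> sets (PiM {..<n} (\<lambda>_. borel))" "HB \<in> sets (PiM {..<n} (\<lambda>_. borel))"
    "measure (sparse_model_given D n F \<mu>) MB \<le> exp 1 * (measure D {..< t - \<mu>} / \<delta>)"
    "measure (sparse_model_given D n F \<mu>) HB \<le> 2 * (exp 1 * ((1 + 2 / \<delta>) * q))"
    "\<And>X. X \<in> space (PiM {..<n} (\<lambda>_. borel)) \<Longrightarrow> X \<notin> MB \<Longrightarrow> FNP F (BH_rej \<Psi> q n X) \<le> \<delta>"
    "\<And>X. X \<in> space (PiM {..<n} (\<lambda>_. borel)) \<Longrightarrow> X \<notin> MB \<Longrightarrow> X \<notin> HB \<Longrightarrow>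
       FDP F (BH_rej \<Psi> q n X) \<le> \<delta>"
proof -
  let ?m = "real (card F)"
  let ?PS = "PiM {..<n} (\<lambda>_. borel :: real measure)"
  define v where "v = nat \<lfloor>\<delta> * ?m\<rfloor> + 1"
  define c where "c = nat \<lfloor>\<delta> * ?m / 2\<rfloor> + 1"
  have v: "1 \<le> v" "\<delta> * ?m \<le> real v" "real v \<le> \<delta> * ?m + 1"
    unfolding v_def using \<delta> by (auto simp: of_nat_nat) linarith+
  have c: "1 \<le> c" "\<delta> * ?m \<le> 2 * real c" "2 * (real c - 1) \<le> \<delta> * ?m"
    unfolding c_def using \<delta> by (auto simp: of_nat_nat) linarith+
  define MB where "MB = {X \<in> space ?PS. v \<le> card {i \<in> F. X i < t}}"
  define HB where "HB = (\<Union>w\<in>{c..n}. {X \<in> space ?PS.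
      w \<le> card {j \<in> {..<n} - F. \<Psi> (X j) \<le> real (card F + w) * q / real n}})"
  have MB_sets: "MB \<in> sets ?PS"
    using sets_PiM_card_ge[of F "{..<n}" "\<lambda>_. {..<t}" "\<lambda>_. borel" v] F(1)
    unfolding MB_def by (simp add: finite_subset)
  have HB_sets: "HB \<in> sets ?PS"
    unfolding HB_def
    by (intro sets.finite_UN finite_atLeastAtMost sets_PiM_card_survival_le[OF cont]) auto
  have MB_le: "measure (sparse_model_given D n F \<mu>) MB \<le> exp 1 * (measure D {..< t - \<mu>} / \<delta>)"
    using prob_many_signals_below_le[OF F(1) v(1,2) \<delta>(1)]
    unfolding MB_def space_sparse_model_given .
  have HB_le: "measure (sparse_model_given D n F \<mu>) HB \<le> 2 * (exp 1 * ((1 + 2 / \<delta>) * q))"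
    using prob_BH_null_excess_le[OF cont q \<delta>(1) c(1,2)]
    unfolding HB_def space_sparse_model_given .
  have missed: "real (card {i \<in> F. X i < t}) \<le> \<delta> * ?m" if "X \<in> space ?PS" "X \<notin> MB" for X
  proof -
    have "card {i \<in> F. X i < t} + 1 \<le> v" using that unfolding MB_def by simp
    then show ?thesis using v(3) by linarith
  qed
  have FNP: "FNP F (BH_rej \<Psi> q n X) \<le> \<delta>" if "X \<in> space ?PS" "X \<notin> MB" for X
    using missed[OF that] by (rule FNP_BH_le[OF antimono_survival F \<delta>(2) _ thr q])
  have FDP: "FDP F (BH_rej \<Psi> q n X) \<le> \<delta>" if X: "X \<in> space ?PS" "X \<notin> MB" "X \<notin> HB" for X
  proof -
    have "card {j \<in> {..<n} - F. \<Psi> (X j) \<le> real (card F + w) * q / real n} < w"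
      if "w \<in> {c..n}" for w
      using X that unfolding HB_def by (auto simp: not_le)
    then show ?thesis
      by (rule FDP_BH_le[OF antimono_survival F less_imp_le[OF \<delta>(1)] \<delta>(2) missed[OF X(1,2)] thr q c(3)])
  qed
  show thesis by (rule that[OF MB_sets HB_sets MB_le HB_le FNP FDP])
qed

lemma prob_FNP_BH_gt_le:
  assumes cont: "continuous_on UNIV \<Psi>" and m: "1 \<le> m" "m \<le> n" and q: "0 \<le> q"
    and \<delta>: "0 < \<delta>" "\<delta> \<le> 1/2" "\<delta> \<le> \<epsilon>"
    and thr: "\<Psi> t \<le> real m * q / (2 * real n)"
  shows "measure (sparse_model D n m \<mu>)
           {\<omega> \<in> space (sparse_model D n m \<mu>). \<epsilon> < FNP (fst \<omega>) (BH_rej \<Psi> q n (snd \<omega>))}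
         \<le> exp 1 * (measure D {..< t - \<mu>} / \<delta>)"
proof -
  let ?M = "sparse_model D n m \<mu>"
  have "\<exists>A \<in> sets ?M. {\<omega> \<in> space ?M. \<epsilon> < FNP (fst \<omega>) (BH_rej \<Psi> q n (snd \<omega>))} \<subseteq> A
          \<and> measure ?M A \<le> exp 1 * (measure D {..< t - \<mu>} / \<delta>)"
  proof (rule sparse_model_event_le[OF m(2)])
    fix F assume F: "F \<subseteq> {..<n}" "card F = m"
    obtain MB HB where MB: "MB \<in> sets (PiM {..<n} (\<lambda>_. borel))"
        "measure (sparse_model_given D n F \<mu>) MB \<le> exp 1 * (measure D {..< t - \<mu>} / \<delta>)"
        "\<And>X. X \<in> space (PiM {..<n} (\<lambda>_. borel)) \<Longrightarrow> X \<notin> MB \<Longrightarrow> FNP F (BH_rej \<Psi> q n X) \<le> \<delta>"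
      using BH_error_events_given[OF cont F(1) _ q \<delta>(1,2), of t \<mu>] F(2) m(1) thr by metis
    show "\<exists>B \<in> sets (PiM {..<n} (\<lambda>_. borel)).
            measure (sparse_model_given D n F \<mu>) B \<le> exp 1 * (measure D {..< t - \<mu>} / \<delta>) \<and>
            (\<forall>X \<in> space (PiM {..<n} (\<lambda>_. borel)). \<epsilon> < FNP (fst (F, X)) (BH_rej \<Psi> q n (snd (F, X))) \<longrightarrow> X \<in> B)"
      using MB \<delta>(3) by (intro bexI[of _ MB]) force+
  qed (use \<delta>(1) in simp)
  then show ?thesis
    using measure_le_of_subset[OF prob_space.finite_measure[OF prob_space_sparse_model[OF m(2)]]]
    by (meson order_trans)
qed

lemma risk_BH_le:
  assumes cont: "continuous_on UNIV \<Psi>" and m: "1 \<le> m" "m \<le> n" and q: "0 \<le> q"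
    and \<delta>: "0 < \<delta>" "\<delta> \<le> 1/2"
    and thr: "\<Psi> t \<le> real m * q / (2 * real n)"
  shows "(\<integral>\<omega>. FDP (fst \<omega>) (BH_rej \<Psi> q n (snd \<omega>)) \<partial>sparse_model D n m \<mu>)
           + (\<integral>\<omega>. FNP (fst \<omega>) (BH_rej \<Psi> q n (snd \<omega>)) \<partial>sparse_model D n m \<mu>)
         \<le> 2 * (\<delta> + (exp 1 * (measure D {..< t - \<mu>} / \<delta>) + 2 * (exp 1 * ((1 + 2 / \<delta>) * q))))"
proof -
  let ?M = "sparse_model D n m \<mu>"
  let ?b = "exp 1 * (measure D {..< t - \<mu>} / \<delta>) + 2 * (exp 1 * ((1 + 2 / \<delta>) * q))"
  let ?good = "\<lambda>\<omega>. FNP (fst \<omega>) (BH_rej \<Psi> q n (snd \<omega>)) \<le> \<delta> \<and> FDP (fst \<omega>) (BH_rej \<Psi> q n (snd \<omega>)) \<le> \<delta>"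
  have "\<exists>A \<in> sets ?M. {\<omega> \<in> space ?M. \<not> ?good \<omega>} \<subseteq> A \<and> measure ?M A \<le> ?b"
  proof (rule sparse_model_event_le[OF m(2)])
    fix F assume F: "F \<subseteq> {..<n}" "card F = m"
    obtain MB HB where MB: "MB \<in> sets (PiM {..<n} (\<lambda>_. borel))" "HB \<in> sets (PiM {..<n} (\<lambda>_. borel))"
        "measure (sparse_model_given D n F \<mu>) MB \<le> exp 1 * (measure D {..< t - \<mu>} / \<delta>)"
        "measure (sparse_model_given D n F \<mu>) HB \<le> 2 * (exp 1 * ((1 + 2 / \<delta>) * q))"
        "\<And>X. X \<in> space (PiM {..<n} (\<lambda>_. borel)) \<Longrightarrow> X \<notin> MB \<Longrightarrow> FNP F (BH_rej \<Psi> q n X) \<le> \<delta>"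
        "\<And>X. X \<in> space (PiM {..<n} (\<lambda>_. borel)) \<Longrightarrow> X \<notin> MB \<Longrightarrow> X \<notin> HB \<Longrightarrow>
           FDP F (BH_rej \<Psi> q n X) \<le> \<delta>"
      using BH_error_events_given[OF cont F(1) _ q \<delta>, of t \<mu>] F(2) m(1) thr by metis
    have "measure (sparse_model_given D n F \<mu>) (MB \<union> HB)
            \<le> measure (sparse_model_given D n F \<mu>) MB + measure (sparse_model_given D n F \<mu>) HB"
      using MB(1,2) by (intro measure_Un_le) (simp_all add: sets_sparse_model_given)
    then show "\<exists>B \<in> sets (PiM {..<n} (\<lambda>_. borel)). measure (sparse_model_given D n F \<mu>) B \<le> ?b \<and>
            (\<forall>X \<in> space (PiM {..<n} (\<lambda>_. borel)). \<not> ?good (F, X) \<longrightarrow> X \<in> B)"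
      using MB by (intro bexI[of _ "MB \<union> HB"]) force+
  qed (use \<delta>(1) q in simp)
  then obtain A where A: "A \<in> sets ?M" "{\<omega> \<in> space ?M. \<not> ?good \<omega>} \<subseteq> A" "measure ?M A \<le> ?b"
    by blast
  have "(\<integral>\<omega>. FDP (fst \<omega>) (BH_rej \<Psi> q n (snd \<omega>)) \<partial>?M) \<le> \<delta> + measure ?M A"
    using A(1,2) \<delta>(1) by (intro integral_le_of_exceptional_set prob_space_sparse_model[OF m(2)] FDP_le_1) auto
  moreover have "(\<integral>\<omega>. FNP (fst \<omega>) (BH_rej \<Psi> q n (snd \<omega>)) \<partial>?M) \<le> \<delta> + measure ?M A"
    using A(1,2) \<delta>(1) by (intro integral_le_of_exceptional_set prob_space_sparse_model[OF m(2)] FNP_le_1) auto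
  ultimately have "(\<integral>\<omega>. FDP (fst \<omega>) (BH_rej \<Psi> q n (snd \<omega>)) \<partial>?M)
      + (\<integral>\<omega>. FNP (fst \<omega>) (BH_rej \<Psi> q n (snd \<omega>)) \<partial>?M) \<le> (\<delta> + measure ?M A) + (\<delta> + measure ?M A)"
    by (rule add_mono)
  also have "\<dots> \<le> 2 * (\<delta> + ?b)" using A(3) by simp
  finally show ?thesis .
qed

lemma tendsto_prob_FNP_BH_gt:
  assumes cont: "continuous_on UNIV \<Psi>" and q: "\<And>n. 0 \<le> q n" and \<epsilon>: "0 < \<epsilon>"
    and m: "\<forall>\<^sub>F n in sequentially. 1 \<le> m n \<and> m n \<le> n"
    and thr: "\<forall>\<^sub>F n in sequentially. \<Psi> (t n) \<le> real (m n) * q n / (2 * real n)"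
    and tail: "(\<lambda>n. measure D {..< t n - \<mu> n}) \<longlonglongrightarrow> 0"
  shows "(\<lambda>n. measure (sparse_model D n (m n) (\<mu> n)) {\<omega> \<in> space (sparse_model D n (m n) (\<mu> n)).
            \<epsilon> < FNP (fst \<omega>) (BH_rej \<Psi> (q n) n (snd \<omega>))}) \<longlonglongrightarrow> 0"
proof (rule tendsto_sandwich[OF _ _ tendsto_const])
  define \<delta> where "\<delta> = min \<epsilon> (1/2)"
  have \<delta>: "0 < \<delta>" "\<delta> \<le> 1/2" "\<delta> \<le> \<epsilon>" using \<epsilon> unfolding \<delta>_def by auto
  show "\<forall>\<^sub>F n in sequentially. measure (sparse_model D n (m n) (\<mu> n)) {\<omega> \<in> space (sparse_model D n (m n) (\<mu> n)).
            \<epsilon> < FNP (fst \<omega>) (BH_rej \<Psi> (q n) n (snd \<omega>))} \<le> exp 1 * (measure D {..< t n - \<mu> n} / \<delta>)"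
    using m thr by eventually_elim (intro prob_FNP_BH_gt_le[OF cont _ _ q \<delta>]; simp)
  show "(\<lambda>n. exp 1 * (measure D {..< t n - \<mu> n} / \<delta>)) \<longlonglongrightarrow> 0"
    using tendsto_mult_right_zero[OF tendsto_divide_zero[OF tail, of \<delta>], of "exp 1"] by (simp add: mult.commute)
qed simp

lemma tendsto_risk_BH:
  assumes cont: "continuous_on UNIV \<Psi>" and q: "\<And>n. 0 \<le> q n" "q \<longlonglongrightarrow> 0"
    and m: "\<forall>\<^sub>F n in sequentially. 1 \<le> m n \<and> m n \<le> n"
    and thr: "\<forall>\<^sub>F n in sequentially. \<Psi> (t n) \<le> real (m n) * q n / (2 * real n)"
    and tail: "(\<lambda>n. measure D {..< t n - \<mu> n}) \<longlonglongrightarrow> 0"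
  shows "(\<lambda>n. (\<integral>\<omega>. FDP (fst \<omega>) (BH_rej \<Psi> (q n) n (snd \<omega>)) \<partial>sparse_model D n (m n) (\<mu> n))
            + (\<integral>\<omega>. FNP (fst \<omega>) (BH_rej \<Psi> (q n) n (snd \<omega>)) \<partial>sparse_model D n (m n) (\<mu> n))) \<longlonglongrightarrow> 0"
    (is "?risk \<longlonglongrightarrow> 0")
proof (rule order_tendstoI)
  fix a :: real assume "a < 0"
  moreover have "0 \<le> ?risk n" for n
    by (intro add_nonneg_nonneg Bochner_Integration.integral_nonneg FDP_nonneg FNP_nonneg)
  ultimately show "\<forall>\<^sub>F n in sequentially. a < ?risk n"
    by (intro always_eventually allI) (meson less_le_trans)
next
  fix a :: real assume a: "0 < a"
  define \<delta> where "\<delta> = min (a / 4) (1/2)"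
  have \<delta>: "0 < \<delta>" "\<delta> \<le> 1/2" "\<delta> \<le> a / 4" using a unfolding \<delta>_def by auto
  have lin: "2 * (\<delta> + x) < a" if "x < a / 4" for x using that \<delta>(3) by argo
  let ?b = "\<lambda>n. exp 1 * (measure D {..< t n - \<mu> n} / \<delta>) + 2 * (exp 1 * ((1 + 2 / \<delta>) * q n))"
  have "?b \<longlonglongrightarrow> exp 1 * (0 / \<delta>) + 2 * (exp 1 * ((1 + 2 / \<delta>) * 0))"
    by (intro tendsto_intros tail q(2)) (use \<delta> in simp)
  then have "?b \<longlonglongrightarrow> 0" by simp
  then have "\<forall>\<^sub>F n in sequentially. ?b n < a / 4" using a by (intro order_tendstoD(2)) auto
  with m thr show "\<forall>\<^sub>F n in sequentially. ?risk n < a"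
  proof eventually_elim
    case (elim n)
    have "?risk n \<le> 2 * (\<delta> + ?b n)"
      using elim by (intro risk_BH_le[OF cont _ _ q(1) \<delta>(1,2)]) simp_all
    also have "\<dots> < a" using lin[OF elim(3)] .
    finally show ?case .
  qed
qed

end

section \<open>Asymptotics of the parameters\<close>

lemma nat_floor_powr_bounds:
  fixes a :: real
  assumes a: "0 \<le> a" "a \<le> 1" and n: "1 \<le> n"
  shows "1 \<le> nat \<lfloor>real n powr a\<rfloor>" "nat \<lfloor>real n powr a\<rfloor> \<le> n"
    "real n powr a / 2 \<le> real (nat \<lfloor>real n powr a\<rfloor>)"
proof -
  let ?x = "real n powr a"
  have x1: "1 \<le> ?x" using n a by (intro ge_one_powr_ge_zero) auto
  have xn: "?x \<le> real n" using n a powr_mono[of a 1 "real n"] by auto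
  have floor: "real (nat \<lfloor>?x\<rfloor>) = real_of_int \<lfloor>?x\<rfloor>" using x1 by simp
  have f1: "1 \<le> \<lfloor>?x\<rfloor>" using x1 by (simp add: one_le_floor)
  then show "1 \<le> nat \<lfloor>?x\<rfloor>" by linarith
  show "nat \<lfloor>?x\<rfloor> \<le> n" using floor xn of_int_floor_le[of ?x] by (simp add: nat_le_iff floor_le_iff)
  show "?x / 2 \<le> real (nat \<lfloor>?x\<rfloor>)"
    using floor f1 real_of_int_floor_add_one_gt[of ?x] by linarith
qed

text \<open>The AGG tail: at t = (\<gamma> s log n)^(1/\<gamma>) we have t^\<gamma> = \<gamma> s log n, so log \<Psi>(t) is about
  -s log n.\<close>

lemma AGG_right_survival_le_powr:
  assumes agg: "AGG_right \<Psi> \<gamma>" and s: "0 < s" "s' < s"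
  shows "\<forall>\<^sub>F n in sequentially. \<Psi> ((\<gamma> * s * ln (real n)) powr (1/\<gamma>)) \<le> real n powr (- s')"
proof -
  have \<gamma>: "0 < \<gamma>" and lim: "((\<lambda>x. x powr (-\<gamma>) * ln (\<Psi> x)) \<longlongrightarrow> -1/\<gamma>) at_top"
    using agg unfolding AGG_right_def by auto
  define c where "c = s' / (\<gamma> * s)"
  have "-1/\<gamma> < - c" unfolding c_def using \<gamma> s by (simp add: field_simps)
  from order_tendstoD(2)[OF lim this]
  have ev: "\<forall>\<^sub>F x in at_top. x powr (-\<gamma>) * ln (\<Psi> x) < - c" .
  let ?t = "\<lambda>n::nat. (\<gamma> * s * ln (real n)) powr (1/\<gamma>)"
  have "filterlim ?t at_top sequentially" using \<gamma> s by real_asymp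
  from eventually_compose_filterlim[OF ev this] eventually_ge_at_top[of 2]
  show ?thesis
  proof eventually_elim
    case (elim n)
    let ?L = "\<gamma> * s * ln (real n)"
    have L: "0 < ?L" using \<gamma> s elim(2) by simp
    have "0 < ln (real n)" using elim(2) by simp
    then have t: "0 < ?t n" "?t n powr \<gamma> = ?L" using L \<gamma> s by (simp_all add: powr_powr)
    have "?t n powr (-\<gamma>) * ?t n powr \<gamma> = 1" using t(1) by (simp add: powr_minus)
    then have "ln (\<Psi> (?t n)) = (?t n powr (-\<gamma>) * ln (\<Psi> (?t n))) * ?t n powr \<gamma>"
      by (simp add: algebra_simps)
    also have "\<dots> \<le> - c * ?t n powr \<gamma>" using elim(1) by (intro mult_right_mono) auto
    also have "\<dots> = - s' * ln (real n)" unfolding t(2) c_def using \<gamma> s by simp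
    finally have ln_le: "ln (\<Psi> (?t n)) \<le> - s' * ln (real n)" .
    then show ?case
    proof (cases "0 < \<Psi> (?t n)")
      case True
      then have "\<Psi> (?t n) = exp (ln (\<Psi> (?t n)))" by simp
      also have "\<dots> \<le> exp (- s' * ln (real n))" using ln_le by simp
      also have "\<dots> = real n powr (- s')" using elim(2) by (simp add: powr_def)
      finally show ?thesis .
    qed (use powr_ge_zero[of "real n" "- s'"] in linarith)
  qed
qed

lemma eventually_powr_le_BH_threshold:
  fixes \<beta> s' :: real and q :: "nat \<Rightarrow> real"
  assumes \<beta>: "0 < \<beta>" "\<beta> < 1" "\<beta> < s'"
    and q: "\<forall>a>0. filterlim (\<lambda>n. real n powr a * q n) at_top sequentially"
  shows "\<forall>\<^sub>F n in sequentially.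
           real n powr (- s') \<le> real (nat \<lfloor>real n powr (1 - \<beta>)\<rfloor>) * q n / (2 * real n)"
proof -
  define a where "a = s' - \<beta>"
  have "0 < a" unfolding a_def using \<beta> by simp
  with q have "\<forall>\<^sub>F n in sequentially. 4 \<le> real n powr a * q n" by (auto simp: filterlim_at_top)
  with eventually_ge_at_top[of 1] show ?thesis
  proof eventually_elim
    case (elim n)
    let ?m = "real (nat \<lfloor>real n powr (1 - \<beta>)\<rfloor>)"
    have n: "0 < real n" using elim(1) by simp
    have q4: "4 * real n powr (- a) \<le> q n"
      using elim(2) n by (simp add: powr_minus field_simps)
    have "real n powr (1 - \<beta>) * real n powr (- a) = real n powr (1 + - s')"
      unfolding a_def by (simp flip: powr_add)
    also have "\<dots> = real n * real n powr (- s')" using n by (subst powr_add) simp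
    finally have "2 * real n * real n powr (- s') = real n powr (1 - \<beta>) / 2 * (4 * real n powr (- a))"
      by (simp add: mult.commute)
    also have "\<dots> \<le> ?m * q n"
      using nat_floor_powr_bounds(3)[of "1 - \<beta>" n] \<beta> elim(1) q4 by (intro mult_mono) auto
    finally show ?case using n by (simp add: field_simps)
  qed
qed

theorem theorem2:
  fixes \<gamma> \<beta> r :: real and \<Psi> :: "real \<Rightarrow> real" and D :: "real measure"
    and q :: "nat \<Rightarrow> real"
  assumes "\<gamma> \<ge> 1" and "0 < \<beta>" and "\<beta> < 1" and "r > 0" and "r > \<beta>"
    and "prob_space D" and "sets D = sets borel"
    and "\<forall>y. \<Psi> y = measure D {y..}"
    and "continuous_on UNIV \<Psi>"
    and "AGG_right \<Psi> \<gamma>"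
    and "\<forall>n. 0 < q n \<and> q n < 1"
    and "\<forall>a>0. filterlim (\<lambda>n. real n powr a * q n) at_top sequentially"
  shows
    "let M = (\<lambda>n. sparse_model D n (nat \<lfloor>real n powr (1 - \<beta>)\<rfloor>)
                        ((\<gamma> * r * ln (real n)) powr (1 / \<gamma>)))
     in (\<forall>\<epsilon>>0. (\<lambda>n. measure (M n)
              {\<omega> \<in> space (M n). FNP (fst \<omega>) (BH_rej \<Psi> (q n) n (snd \<omega>)) > \<epsilon>})
            \<longlonglongrightarrow> 0)
      \<and> (q \<longlonglongrightarrow> 0 \<longrightarrow>
          (\<lambda>n. (\<integral>\<omega>. FDP (fst \<omega>) (BH_rej \<Psi> (q n) n (snd \<omega>)) \<partial>M n)
              + (\<integral>\<omega>. FNP (fst \<omega>) (BH_rej \<Psi> (q n) n (snd \<omega>)) \<partial>M n)) \<longlonglongrightarrow> 0)"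
proof -
  interpret survival_function D \<Psi>
    using assms(6-8) by (intro survival_function.intro real_distribution.intro
        survival_function_axioms.intro real_distribution_axioms.intro) auto
  define s where "s = (\<beta> + r) / 2"
  define t where "t = (\<lambda>n::nat. (\<gamma> * s * ln (real n)) powr (1 / \<gamma>))"
  have \<gamma>: "0 < \<gamma>" and s: "0 < s" "\<beta> < (\<beta> + s) / 2" "(\<beta> + s) / 2 < s" "s < r"
    using assms(1,2,5) unfolding s_def by auto
  have q: "0 \<le> q n" for n using assms(11) by (simp add: less_imp_le)
  have m: "\<forall>\<^sub>F n in sequentially. 1 \<le> nat \<lfloor>real n powr (1 - \<beta>)\<rfloor> \<and> nat \<lfloor>real n powr (1 - \<beta>)\<rfloor> \<le> n"
    using eventually_ge_at_top[of 1] by eventually_elim (use nat_floor_powr_bounds assms(2,3) in auto)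
  have thr: "\<forall>\<^sub>F n in sequentially. \<Psi> (t n) \<le> real (nat \<lfloor>real n powr (1 - \<beta>)\<rfloor>) * q n / (2 * real n)"
    using AGG_right_survival_le_powr[OF assms(10) s(1,3)] eventually_powr_le_BH_threshold[OF assms(2,3) s(2) assms(12)]
    unfolding t_def by eventually_elim linarith
  have tail: "(\<lambda>n. measure D {..< t n - (\<gamma> * r * ln (real n)) powr (1 / \<gamma>)}) \<longlonglongrightarrow> 0"
    unfolding t_def by (rule tendsto_measure_below_shift_gap[OF \<gamma> s(1,4)])
  show ?thesis
    unfolding Let_def
    using tendsto_prob_FNP_BH_gt[OF assms(9) q _ m thr tail] tendsto_risk_BH[OF assms(9) q _ m thr tail]
    by blast
qed

end
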